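(* For any prime power $q$, there exists a $\left(3;\ (q^2+q+1)(q+1),\ q^2+q+1,\ 3\right)$ perfect hash family.
   Context: Let $r,m,q',t$ be integers with $m\ge q'\ge t\ge2$. An $(r;m,q',t)$ perfect hash family (PHF) is a set $\mathcal{X}$ of $r$ functions from a set $\mathcal{B}$ with $|\mathcal{B}|=m$ to a set $\mathcal{C}$ with $|\mathcal{C}|=q'$ such that for every $\mathcal{T}\subseteq\mathcal{B}$ with $|\mathcal{T}|=t$ there is at least one $\varphi\in\mathcal{X}$ whose restriction to $\mathcal{T}$ is injective. Equivalently, an $r\times m$ array over $q'$ symbols in which every $r\times t$ subarray has at least one row with $t$ distinct symbols. *)

theory Defs
  imports "HOL-Library.FuncSet" "HOL-Computational_Algebra.Primes"
begin

text \<open>Functions are taken extensionally (undefined outside B).\<close>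

definition is_PHF :: "('a \<Rightarrow> 'b) set \<Rightarrow> 'a set \<Rightarrow> 'b set \<Rightarrow> nat \<Rightarrow> nat \<Rightarrow> nat \<Rightarrow> nat \<Rightarrow> bool" where
  "is_PHF X B C r m q' t \<longleftrightarrow>
     finite B \<and> card B = m \<and> finite C \<and> card C = q' \<and>
     finite X \<and> card X = r \<and> X \<subseteq> (B \<rightarrow>\<^sub>E C) \<and>
     (\<forall>T \<subseteq> B. card T = t \<longrightarrow> (\<exists>\<phi>\<in>X. inj_on \<phi> T))"

definition PHF_exists :: "nat \<Rightarrow> nat \<Rightarrow> nat \<Rightarrow> nat \<Rightarrow> bool" where
  "PHF_exists r m q' t \<longleftrightarrow> (\<exists>(X :: (nat \<Rightarrow> nat) set) B C. is_PHF X B C r m q' t)"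

end

theory Submission
  imports Defs
begin

(* Write x < N (q + 1), where N = q^2 + q + 1, as x = j + N d with j < N and d <= q, and take the
   three rows x |-> j + w d (mod N) for w = 0, 1, q + 1.  Any two of the rows together determine x:
   if rows w and w' both identify x and y, then N divides (w - w') (d_x - d_y), whose absolute value
   is at most (q + 1) q < N.  So if every row collides on a triple, the three collisions lie on the
   three different pairs of the triple, i.e. along a cycle u ~ v ~ w ~ u for the rows 0, 1, q + 1.
   Adding the three congruences gives N | d_v + q d_w - (q + 1) d_u; as d_v + q d_w and (q + 1) d_u
   both lie in [0, N), this forces d_v - d_w = (q + 1) (d_u - d_w), hence d_u = d_w and then u = w. *)

lemma int_dvd_abs_less_imp_eq_0:
  fixes n z :: int
  assumes "n dvd z" and "\<bar>z\<bar> < n"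
  shows "z = 0"
  using dvd_imp_le_int[of z n] assms by linarith

lemma dvd_cycle_sum_imp_eq:
  fixes q a b c :: int
  assumes a: "0 \<le> a" "a \<le> q" and b: "0 \<le> b" "b \<le> q" and c: "0 \<le> c" "c \<le> q"
    and dvd: "q * q + q + 1 dvd b + q * c - (q + 1) * a"
  shows "a = c"
proof -
  have "0 \<le> q * c" "q * c \<le> q * q"
    using a c by (simp_all add: mult_left_mono)
  moreover have "0 \<le> (q + 1) * a" "(q + 1) * a \<le> (q + 1) * q"
    using a by (simp_all add: mult_left_mono)
  moreover have "(q + 1) * q = q * q + q"
    by (simp add: algebra_simps)
  ultimately have "\<bar>b + q * c - (q + 1) * a\<bar> < q * q + q + 1"
    using b by linarith
  with dvd have "b + q * c - (q + 1) * a = 0"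
    by (rule int_dvd_abs_less_imp_eq_0)
  then have "b - c = (q + 1) * (a - c)"
    by (simp add: algebra_simps)
  moreover from this have "b - c = 0"
    by (rule int_dvd_abs_less_imp_eq_0[OF dvdI]) (use b c in linarith)
  ultimately show "a = c"
    using a by simp
qed

lemma inj_on_triple_iff:
  assumes "a \<noteq> b" "b \<noteq> c" "a \<noteq> c"
  shows "inj_on f {a, b, c} \<longleftrightarrow> f a \<noteq> f b \<and> f a \<noteq> f c \<and> f b \<noteq> f c"
  using assms by (auto simp: inj_on_def)

lemma triple_collisions_form_cycle:
  assumes "card T = 3"
    and "\<not> inj_on f T" "\<not> inj_on g T" "\<not> inj_on h T"
    and "inj_on (\<lambda>x. (f x, g x)) T" "inj_on (\<lambda>x. (f x, h x)) T" "inj_on (\<lambda>x. (g x, h x)) T"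
  shows "\<exists>u\<in>T. \<exists>v\<in>T. \<exists>w\<in>T. u \<noteq> w \<and> f u = f v \<and> g v = g w \<and> h w = h u"
proof -
  obtain a b c where T: "T = {a, b, c}" and abc: "a \<noteq> b" "b \<noteq> c" "a \<noteq> c"
    using assms(1) card_3_iff by metis
  have "f a = f b \<or> f a = f c \<or> f b = f c" "g a = g b \<or> g a = g c \<or> g b = g c"
    "h a = h b \<or> h a = h c \<or> h b = h c"
    using assms(2-4) unfolding T inj_on_triple_iff[OF abc] by blast+
  moreover have "\<not> (f x = f y \<and> g x = g y)" "\<not> (f x = f y \<and> h x = h y)" "\<not> (g x = g y \<and> h x = h y)"
    if "x \<in> T" "y \<in> T" "x \<noteq> y" for x y
    using assms(5-7) that by (auto dest: inj_onD)
  ultimately show ?thesis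
    unfolding T using abc by (smt (verit) insertCI)
qed

definition shear :: "nat \<Rightarrow> nat \<Rightarrow> nat \<Rightarrow> nat" where
  "shear N w x = (x mod N + w * (x div N)) mod N"

lemma shear_less: "0 < N \<Longrightarrow> shear N w x < N"
  by (simp add: shear_def)

lemma shear_eq_imp_dvd:
  assumes "shear N w x = shear N w y"
  shows "int N dvd (int (x mod N) - int (y mod N)) + int w * (int (x div N) - int (y div N))"
proof -
  have "int (x mod N + w * (x div N)) mod int N = int (y mod N + w * (y div N)) mod int N"
    using assms unfolding shear_def by (metis of_nat_mod)
  then show ?thesis
    by (simp add: mod_eq_dvd_iff algebra_simps)
qed

lemma shear_eq_same_block_imp_eq:
  assumes "0 < N" and "shear N w x = shear N w y" and "x div N = y div N"
  shows "x = y"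
proof -
  have "int N dvd int (x mod N) - int (y mod N)"
    using shear_eq_imp_dvd[OF assms(2)] assms(3) by simp
  moreover have "\<bar>int (x mod N) - int (y mod N)\<bar> < int N"
    using mod_less_divisor[OF assms(1), of x] mod_less_divisor[OF assms(1), of y] by linarith
  ultimately have "int (x mod N) - int (y mod N) = 0"
    by (rule int_dvd_abs_less_imp_eq_0)
  with assms(3) show "x = y"
    by (metis div_mult_mod_eq eq_iff_diff_eq_0 of_nat_eq_iff)
qed

lemma shears_separate_points:
  assumes "(q + 1) * q < N" and "w1 \<le> q + 1" "w2 \<le> q + 1" "w1 \<noteq> w2"
  shows "inj_on (\<lambda>x. (shear N w1 x, shear N w2 x)) {..<N * (q + 1)}"
proof (rule inj_onI)
  fix x y
  assume "x \<in> {..<N * (q + 1)}" "y \<in> {..<N * (q + 1)}"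
    and eq: "(shear N w1 x, shear N w2 x) = (shear N w1 y, shear N w2 y)"
  define a where "a = int (x mod N) - int (y mod N)"
  define b where "b = int (x div N) - int (y div N)"
  have "x div N < q + 1" "y div N < q + 1"
    using \<open>x \<in> _\<close> \<open>y \<in> _\<close> by (simp_all add: less_mult_imp_div_less mult.commute)
  then have "\<bar>b\<bar> \<le> int q"
    unfolding b_def by linarith
  moreover have "\<bar>int w1 - int w2\<bar> \<le> int q + 1"
    using assms(2,3) by linarith
  ultimately have "\<bar>(int w1 - int w2) * b\<bar> \<le> (int q + 1) * int q"
    unfolding abs_mult by (intro mult_mono) auto
  also have "\<dots> < int N"
    using assms(1) by (metis of_nat_add of_nat_less_iff of_nat_mult of_nat_1)
  finally have "\<bar>(int w1 - int w2) * b\<bar> < int N" .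
  moreover have "int N dvd a + int w1 * b" "int N dvd a + int w2 * b"
    using eq shear_eq_imp_dvd unfolding a_def b_def by blast+
  then have "int N dvd (a + int w1 * b) - (a + int w2 * b)"
    by (rule dvd_diff)
  then have "int N dvd (int w1 - int w2) * b"
    by (simp add: algebra_simps)
  ultimately have "(int w1 - int w2) * b = 0"
    by (intro int_dvd_abs_less_imp_eq_0)
  then have "x div N = y div N"
    using assms(4) unfolding b_def by simp
  moreover have "0 < N"
    using assms(1) by simp
  ultimately show "x = y"
    using eq shear_eq_same_block_imp_eq by blast
qed

lemma shear_cycle_closes:
  assumes N: "N = q\<^sup>2 + q + 1"
    and "u \<in> {..<N * (q + 1)}" "v \<in> {..<N * (q + 1)}" "w \<in> {..<N * (q + 1)}"
    and uv: "shear N 0 u = shear N 0 v"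
    and vw: "shear N 1 v = shear N 1 w"
    and wu: "shear N (q + 1) w = shear N (q + 1) u"
  shows "u = w"
proof -
  define j where "j x = int (x mod N)" for x
  define d where "d x = int (x div N)" for x
  have d_bounds: "0 \<le> d x \<and> d x \<le> int q" if "x \<in> {..<N * (q + 1)}" for x
    using that by (simp add: d_def less_Suc_eq_le[symmetric] less_mult_imp_div_less mult.commute)
  have "int N dvd j u - j v" "int N dvd (j v - j w) + (d v - d w)"
    "int N dvd (j w - j u) + int (q + 1) * (d w - d u)"
    using shear_eq_imp_dvd[OF uv] shear_eq_imp_dvd[OF vw] shear_eq_imp_dvd[OF wu]
    unfolding j_def d_def by simp_all
  then have "int N dvd (j u - j v) + ((j v - j w) + (d v - d w))
      + ((j w - j u) + int (q + 1) * (d w - d u))"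
    by (rule dvd_add[OF dvd_add])
  then have "int q * int q + int q + 1 dvd d v + int q * d w - (int q + 1) * d u"
    by (simp add: N power2_eq_square algebra_simps)
  then have "d u = d w"
    using d_bounds assms(2-4) by (intro dvd_cycle_sum_imp_eq) auto
  then show "u = w"
    using shear_eq_same_block_imp_eq[OF _ wu] N unfolding d_def by simp
qed

lemma shears_perfect_on_triples:
  assumes "q \<ge> 1" and N: "N = q\<^sup>2 + q + 1"
    and T: "T \<subseteq> {..<N * (q + 1)}" "card T = 3"
  shows "\<exists>w\<in>{0, 1, q + 1}. inj_on (shear N w) T"
proof (rule ccontr)
  assume "\<not> ?thesis"
  then have "\<not> inj_on (shear N 0) T" "\<not> inj_on (shear N 1) T" "\<not> inj_on (shear N (q + 1)) T"
    by auto
  moreover have sep: "inj_on (\<lambda>x. (shear N w1 x, shear N w2 x)) T"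
    if "w1 \<le> q + 1" "w2 \<le> q + 1" "w1 \<noteq> w2" for w1 w2
  proof (rule inj_on_subset[OF shears_separate_points T(1)])
    show "(q + 1) * q < N"
      using N by (simp add: power2_eq_square)
  qed (use that in auto)
  ultimately have "\<exists>u\<in>T. \<exists>v\<in>T. \<exists>w\<in>T. u \<noteq> w \<and> shear N 0 u = shear N 0 v
      \<and> shear N 1 v = shear N 1 w \<and> shear N (q + 1) w = shear N (q + 1) u"
    using assms(1) by (intro triple_collisions_form_cycle[OF T(2)] sep) auto
  then show False
    using shear_cycle_closes[OF N] T(1) by blast
qed

lemma is_PHF_shears:
  assumes "q \<ge> 1" and N: "N = q\<^sup>2 + q + 1"
  defines "B \<equiv> {..<N * (q + 1)}"
  shows "is_PHF ((\<lambda>w. restrict (shear N w) B) ` {0, 1, q + 1}) B {..<N} 3 (N * (q + 1)) N 3"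
proof -
  have "N \<in> B" "0 < N" "q + 1 < N"
    using assms by (auto simp: power2_eq_square)
  then have eval: "restrict (shear N w) B N = w" if "w \<le> q + 1" for w
    using that by (simp add: shear_def)
  have "inj_on (\<lambda>w. restrict (shear N w) B) {0, 1, q + 1}"
  proof (rule inj_onI)
    fix w w' assume "w \<in> {0, 1, q + 1}" "w' \<in> {0, 1, q + 1}"
      and "restrict (shear N w) B = restrict (shear N w') B"
    then have "w \<le> q + 1" "w' \<le> q + 1" "restrict (shear N w) B N = restrict (shear N w') B N"
      by auto
    then show "w = w'"
      by (simp only: eval)
  qed
  then have "card ((\<lambda>w. restrict (shear N w) B) ` {0, 1, q + 1}) = card {0, 1, q + 1}"
    by (rule card_image)
  also have "\<dots> = 3"
    using assms(1) by simp
  finally have "card ((\<lambda>w. restrict (shear N w) B) ` {0, 1, q + 1}) = 3" .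
  moreover have "\<exists>\<phi>\<in>(\<lambda>w. restrict (shear N w) B) ` {0, 1, q + 1}. inj_on \<phi> T"
    if T: "T \<subseteq> B" "card T = 3" for T
  proof -
    obtain w where "w \<in> {0, 1, q + 1}" "inj_on (shear N w) T"
      using shears_perfect_on_triples[OF assms(1) N T(1)[unfolded B_def] T(2)] by blast
    moreover have "inj_on (restrict (shear N w) B) T \<longleftrightarrow> inj_on (shear N w) T"
      using T(1) by (intro inj_on_cong) auto
    ultimately show ?thesis
      by blast
  qed
  moreover have "(\<lambda>w. restrict (shear N w) B) ` {0, 1, q + 1} \<subseteq> B \<rightarrow>\<^sub>E {..<N}"
    using \<open>0 < N\<close> by (auto simp: shear_less)
  moreover have "card B = N * (q + 1)"
    by (simp add: B_def)
  ultimately show ?thesis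
    unfolding is_PHF_def by (simp add: B_def)
qed

theorem lemma7:
  fixes q p k :: nat
  assumes "prime p" and "k \<ge> 1" and "q = p ^ k"
  shows "PHF_exists 3 ((q^2 + q + 1) * (q + 1)) (q^2 + q + 1) 3"
proof -
  have "q \<ge> 1"
    using assms(1,3) prime_gt_0_nat[of p] by simp
  from is_PHF_shears[OF this refl] show ?thesis
    unfolding PHF_exists_def by blast
qed

end
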